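(* The tree $T_A$ has proper thinness equal to $3$.
   Context: For a graph $G=(V,E)$, a linear ordering $<$ of $V$ and a partition of $V$ into classes are called strongly consistent if for every triple $r<s<t$ of vertices with $rt\in E$: if $r$ and $s$ belong to the same class then $st\in E$, and if $s$ and $t$ belong to the same class then $rs\in E$. The proper thinness $\mathrm{pthin}(G)$ is the minimum $k$ such that some ordering of $V$ and some partition of $V$ into $k$ classes are strongly consistent. $T_0$ is the subdivided star $K_{1,5}$: a center adjacent to five vertices, each of which is adjacent to one further leaf (11 vertices). $T_A$ is the tree obtained from three disjoint copies of $T_0$ and a new vertex $v_0$ by making $v_0$ adjacent to one leaf of each copy (34 vertices; $v_0$ is at distance $3$ from each copy's center). *)

theory Defs
  imports Main
begin

text \<open>A graph is given by a vertex set V and a symmetric edge predicate E.\<close>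

definition strongly_consistent ::
  "'a set \<Rightarrow> ('a \<Rightarrow> 'a \<Rightarrow> bool) \<Rightarrow> 'a list \<Rightarrow> ('a \<Rightarrow> nat) \<Rightarrow> bool" where
  "strongly_consistent V E ord cls \<longleftrightarrow>
     (\<forall>i j l. i < j \<and> j < l \<and> l < length ord \<and> E (ord ! i) (ord ! l) \<longrightarrow>
        (cls (ord ! i) = cls (ord ! j) \<longrightarrow> E (ord ! j) (ord ! l)) \<and>
        (cls (ord ! j) = cls (ord ! l) \<longrightarrow> E (ord ! i) (ord ! j)))"

definition pthin_with :: "'a set \<Rightarrow> ('a \<Rightarrow> 'a \<Rightarrow> bool) \<Rightarrow> nat \<Rightarrow> bool" where
  "pthin_with V E k \<longleftrightarrow>
     (\<exists>ord cls. distinct ord \<and> set ord = V \<and> cls ` V \<subseteq> {..<k} \<and>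
        strongly_consistent V E ord cls)"

definition pthin :: "'a set \<Rightarrow> ('a \<Rightarrow> 'a \<Rightarrow> bool) \<Rightarrow> nat" where
  "pthin V E = (LEAST k. pthin_with V E k)"

text \<open>The tree T_A on vertices 0..33. Copy c (c = 0,1,2) of T_0 uses vertices
 11c .. 11c+10: center 11c, middle vertices 11c+1..11c+5 adjacent to the center,
 leaf 11c+i+5 adjacent to 11c+i (i = 1..5). Vertex 33 is v_0, adjacent to leaf 11c+6
 of each copy.\<close>

definition TA_V :: "nat set" where
  "TA_V = {..<34}"

definition TA_arc :: "nat \<Rightarrow> nat \<Rightarrow> bool" where
  "TA_arc u v \<longleftrightarrow>
     (\<exists>c<3. \<exists>i\<in>{1..5}. (u = 11*c \<and> v = 11*c + i) \<or> (u = 11*c + i \<and> v = 11*c + i + 5))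
     \<or> (\<exists>c<3. u = 33 \<and> v = 11*c + 6)"

definition TA_E :: "nat \<Rightarrow> nat \<Rightarrow> bool" where
  "TA_E u v \<longleftrightarrow> TA_arc u v \<or> TA_arc v u"

end

theory Submission
  imports Defs
begin

text \<open>For the upper bound an explicit ordering of the 34 vertices and a partition into three
  classes are checked by evaluating the definition. For the lower bound a single copy of \<open>T\<^sub>0\<close>
  suffices. Take a strongly consistent layout of the subdivided star (centre \<open>c\<close>, middle vertices
  \<open>m\<^sub>i\<close>, leaves \<open>l\<^sub>i\<close>) with two classes. A middle vertex lying between \<open>c\<close> and another
  middle vertex cannot share the class of \<open>c\<close>; hence if three middle vertices follow \<open>c\<close>, the first
  two share a class and the leaf of the first must precede \<open>c\<close>. Up to reversing the ordering,
  four middle vertices lie on one side of \<open>c\<close>, or three on one side and two on the other, and in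
  both cases the leaf forced across \<open>c\<close> violates strong consistency.\<close>

lemma pthin_with_mono:
  assumes "pthin_with V E k" and "k \<le> k'"
  shows "pthin_with V E k'"
  using assms unfolding pthin_with_def by (metis lessThan_subset_iff subset_trans)

lemma pthin_eqI:
  assumes "pthin_with V E (Suc k)" and "\<not> pthin_with V E k"
  shows "pthin V E = Suc k"
  unfolding pthin_def
proof (rule Least_equality)
  show "Suc k \<le> k'" if "pthin_with V E k'" for k'
    using pthin_with_mono[OF that, of k] assms(2) by (metis not_less_eq_eq)
qed (fact assms(1))

fun triples_wrt :: "('a \<Rightarrow> 'a \<Rightarrow> 'a \<Rightarrow> bool) \<Rightarrow> 'a list \<Rightarrow> bool" where
  "triples_wrt P [] \<longleftrightarrow> True"
| "triples_wrt P (x # xs) \<longleftrightarrow> sorted_wrt (P x) xs \<and> triples_wrt P xs"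

lemma triples_wrt_iff_nth_less:
  "triples_wrt P xs \<longleftrightarrow>
     (\<forall>i j l. i < j \<longrightarrow> j < l \<longrightarrow> l < length xs \<longrightarrow> P (xs ! i) (xs ! j) (xs ! l))"
proof (induction xs)
  case Nil
  then show ?case by simp
next
  case (Cons x xs)
  show ?case
    unfolding triples_wrt.simps Cons.IH sorted_wrt_iff_nth_less
    by (auto simp: nth_Cons split: nat.split)
qed

lemma strongly_consistent_iff_triples_wrt:
  "strongly_consistent V E ord cls \<longleftrightarrow>
     triples_wrt (\<lambda>r s t. E r t \<longrightarrow> (cls r = cls s \<longrightarrow> E s t) \<and> (cls s = cls t \<longrightarrow> E r s)) ord"
  unfolding strongly_consistent_def triples_wrt_iff_nth_less by blast

text \<open>Positions are integers so that the reversed ordering is simply \<open>\<lambda>v. - pos v\<close>.\<close>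

definition strongly_consistent_on ::
  "'a set \<Rightarrow> ('a \<Rightarrow> 'a \<Rightarrow> bool) \<Rightarrow> ('a \<Rightarrow> int) \<Rightarrow> ('a \<Rightarrow> nat) \<Rightarrow> bool" where
  "strongly_consistent_on S E pos cls \<longleftrightarrow>
     (\<forall>r\<in>S. \<forall>s\<in>S. \<forall>t\<in>S. E r t \<longrightarrow> pos r < pos s \<longrightarrow> pos s < pos t \<longrightarrow>
        (cls r = cls s \<longrightarrow> E s t) \<and> (cls s = cls t \<longrightarrow> E r s))"

lemma strongly_consistent_on_reverse:
  assumes "\<And>u v. E u v \<longleftrightarrow> E v u" and "strongly_consistent_on S E pos cls"
  shows "strongly_consistent_on S E (\<lambda>v. - pos v) cls"
  using assms unfolding strongly_consistent_on_def by (metis neg_less_iff_less)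

lemma strongly_consistent_on_positions:
  assumes "distinct ord" and "S \<subseteq> set ord" and "strongly_consistent V E ord cls"
  obtains pos where "strongly_consistent_on S E pos cls" and "inj_on pos S"
proof -
  define idx where "idx = inv_into {..<length ord} ((!) ord)"
  have bij: "bij_betw ((!) ord) {..<length ord} (set ord)"
    using assms(1) by (rule bij_betw_nth) auto
  have idx: "idx v < length ord" "ord ! idx v = v" if "v \<in> S" for v
  proof -
    have "v \<in> (!) ord ` {..<length ord}"
      using that assms(2) bij by (auto simp: bij_betw_def)
    then have "idx v \<in> {..<length ord}" and "ord ! idx v = v"
      unfolding idx_def by (rule inv_into_into, rule f_inv_into_f)
    then show "idx v < length ord" "ord ! idx v = v" by simp_all
  qed
  have "strongly_consistent_on S E (\<lambda>v. int (idx v)) cls"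
    unfolding strongly_consistent_on_def
  proof (intro ballI impI)
    fix r s t assume rst: "r \<in> S" "s \<in> S" "t \<in> S" and "E r t"
      and "int (idx r) < int (idx s)" "int (idx s) < int (idx t)"
    then have "idx r < idx s \<and> idx s < idx t \<and> idx t < length ord \<and>
        E (ord ! idx r) (ord ! idx t)"
      using idx by simp
    then show "(cls r = cls s \<longrightarrow> E s t) \<and> (cls s = cls t \<longrightarrow> E r s)"
      using assms(3) idx[OF rst(1)] idx[OF rst(2)] idx[OF rst(3)]
      unfolding strongly_consistent_def by metis
  qed
  moreover have "inj_on (\<lambda>v. int (idx v)) S"
    by (rule inj_on_inverseI[where g = "\<lambda>i. ord ! nat i"]) (simp add: idx)
  ultimately show thesis by (rule that)
qed

lemma obtain_increasing_list:
  fixes f :: "'a \<Rightarrow> 'b::linorder"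
  assumes "finite A" and "inj_on f A" and "k \<le> card A"
  obtains xs where "length xs = k" and "set xs \<subseteq> A" and "sorted_wrt (\<lambda>x y. f x < f y) xs"
proof -
  interpret folding_insort_key "(\<le>)" "(<)" A f
    using assms(2) by unfold_locales
  obtain ys where ys: "sorted_wrt (<) (map f ys)" "set ys = A" "length ys = card A"
    using finite_set_strict_sorted[OF order_refl assms(1)] .
  show thesis
  proof (rule that)
    show "sorted_wrt (\<lambda>x y. f x < f y) (take k ys)"
      using ys(1) by (simp add: sorted_wrt_map sorted_wrt_take)
  qed (use ys assms(3) in \<open>auto dest: in_set_takeD\<close>)
qed

locale subdivided_star =
  fixes E :: "'a \<Rightarrow> 'a \<Rightarrow> bool" and c :: 'a and m l :: "nat \<Rightarrow> 'a"
  assumes E_sym: "E u v \<longleftrightarrow> E v u"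
    and center_mid: "i < 5 \<Longrightarrow> E c (m i)"
    and mid_leaf: "i < 5 \<Longrightarrow> E (m i) (l i)"
    and not_mid_mid: "i < 5 \<Longrightarrow> j < 5 \<Longrightarrow> \<not> E (m i) (m j)"
    and not_leaf_mid: "i < 5 \<Longrightarrow> j < 5 \<Longrightarrow> i \<noteq> j \<Longrightarrow> \<not> E (l i) (m j)"
    and not_center_leaf: "i < 5 \<Longrightarrow> \<not> E c (l i)"
begin

definition star_vertices :: "'a set" where
  "star_vertices = insert c (m ` {..<5} \<union> l ` {..<5})"

lemma star_vertices_simps [simp]:
  "c \<in> star_vertices"
  "i < 5 \<Longrightarrow> m i \<in> star_vertices"
  "i < 5 \<Longrightarrow> l i \<in> star_vertices"
  unfolding star_vertices_def by auto

lemma leaf_ne_center: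
  assumes "i < 5"
  shows "l i \<noteq> c"
proof
  define j :: nat where "j = (if i = 0 then 1 else 0)"
  have "j < 5" "i \<noteq> j" by (auto simp: j_def)
  moreover assume "l i = c"
  ultimately show False
    using center_mid[of j] not_leaf_mid[of i j] assms by simp
qed

lemma leaf_ne_mid: "i < 5 \<Longrightarrow> j < 5 \<Longrightarrow> i \<noteq> j \<Longrightarrow> l i \<noteq> m j"
  using mid_leaf[of i] not_mid_mid[of i j] by auto

lemma mid_ne_center: "i < 5 \<Longrightarrow> m i \<noteq> c"
  using center_mid[of i] not_mid_mid[of i i] by auto

lemma inj_on_mid: "inj_on m {..<5}"
proof (rule inj_onI, rule ccontr)
  fix i j assume "i \<in> {..<5}" "j \<in> {..<5}" "m i = m j" "i \<noteq> j"
  then show False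
    using mid_leaf[of i] not_leaf_mid[of i j] E_sym[of "m i" "l i"] by auto
qed

end

locale star_layout = subdivided_star +
  fixes pos :: "'a \<Rightarrow> int" and cls :: "'a \<Rightarrow> nat"
  assumes consistent: "strongly_consistent_on star_vertices E pos cls"
    and inj_pos: "inj_on pos star_vertices"
    and two_classes: "v \<in> star_vertices \<Longrightarrow> cls v < 2"
begin

lemma same_class_as_left:
  "r \<in> star_vertices \<Longrightarrow> s \<in> star_vertices \<Longrightarrow> t \<in> star_vertices \<Longrightarrow> E r t \<Longrightarrow>
   pos r < pos s \<Longrightarrow> pos s < pos t \<Longrightarrow> cls s = cls r \<Longrightarrow> E s t"
  using consistent unfolding strongly_consistent_on_def by metis

lemma same_class_as_right:
  "r \<in> star_vertices \<Longrightarrow> s \<in> star_vertices \<Longrightarrow> t \<in> star_vertices \<Longrightarrow> E r t \<Longrightarrow>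
   pos r < pos s \<Longrightarrow> pos s < pos t \<Longrightarrow> cls s = cls t \<Longrightarrow> E r s"
  using consistent unfolding strongly_consistent_on_def by metis

lemma pos_eq_iff:
  "u \<in> star_vertices \<Longrightarrow> v \<in> star_vertices \<Longrightarrow> pos u = pos v \<longleftrightarrow> u = v"
  using inj_pos by (auto dest: inj_onD)

lemma class_of_third:
  "u \<in> star_vertices \<Longrightarrow> v \<in> star_vertices \<Longrightarrow> w \<in> star_vertices \<Longrightarrow> cls u \<noteq> cls v \<Longrightarrow>
   cls w = cls u \<or> cls w = cls v"
  using two_classes[of u] two_classes[of v] two_classes[of w] by linarith

lemma mid_class_ne_center_right:
  assumes "i < 5" "j < 5" "pos c < pos (m i)" "pos (m i) < pos (m j)"
  shows "cls (m i) \<noteq> cls c"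
  using same_class_as_left[of c "m i" "m j"] center_mid[of j] not_mid_mid[of i j] assms
  by auto

lemma mid_class_ne_center_left:
  assumes "i < 5" "j < 5" "pos (m j) < pos (m i)" "pos (m i) < pos c"
  shows "cls (m i) \<noteq> cls c"
  using same_class_as_right[of "m j" "m i" c] center_mid[of j] E_sym[of c "m j"]
    not_mid_mid[of j i] assms
  by auto

lemma leaf_left_of_center:
  assumes "a < 5" "b < 5" "d < 5"
    and "pos c < pos (m a)" "pos (m a) < pos (m b)" "pos (m b) < pos (m d)"
  shows "pos (l a) < pos c"
proof (rule ccontr)
  have "a \<noteq> b" using assms by auto
  have "pos (l a) \<noteq> pos c"
    using leaf_ne_center assms by (simp add: pos_eq_iff)
  moreover assume "\<not> ?thesis"
  ultimately have "pos c < pos (l a)" by simp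
  have "cls (m b) \<noteq> cls c"
    using mid_class_ne_center_right[of b d] assms by simp
  moreover have "cls (m a) \<noteq> cls c"
    using mid_class_ne_center_right[of a d] assms by simp
  ultimately have "cls (m a) = cls (m b)"
    using class_of_third[of "m b" c "m a"] assms by auto
  have "pos (l a) \<noteq> pos (m b)"
    using leaf_ne_mid[OF _ _ \<open>a \<noteq> b\<close>] assms by (simp add: pos_eq_iff)
  then consider "pos (l a) < pos (m b)" | "pos (m b) < pos (l a)"
    by linarith
  then show False
  proof cases
    case 1
    then show False
      using same_class_as_left[of c "l a" "m b"] same_class_as_right[of c "l a" "m b"]
        class_of_third[of "m b" c "l a"] \<open>cls (m b) \<noteq> cls c\<close> \<open>pos c < pos (l a)\<close>
        center_mid[of b] not_leaf_mid[of a b] not_center_leaf[of a] \<open>a \<noteq> b\<close> assms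
      by auto
  next
    case 2
    then show False
      using same_class_as_left[of "m a" "m b" "l a"] \<open>cls (m a) = cls (m b)\<close>
        mid_leaf[of a] not_leaf_mid[of a b] E_sym[of "m b" "l a"] \<open>a \<noteq> b\<close> assms
      by auto
  qed
qed

lemma no_four_mids_right:
  assumes "a < 5" "a' < 5" "b < 5" "d < 5"
    and "pos c < pos (m a)" "pos (m a) < pos (m a')" "pos (m a') < pos (m b)"
    and "pos (m b) < pos (m d)"
  shows False
proof -
  have "pos (l a') < pos c"
    using leaf_left_of_center[of a' b d] assms by simp
  then have "pos (l a') < pos (m a)" using assms by simp
  moreover have "cls (m a) = cls (m a')"
    using mid_class_ne_center_right[of a d] mid_class_ne_center_right[of a' d]
      class_of_third[of "m a" c "m a'"] assms by auto
  moreover have "a' \<noteq> a" using assms by auto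
  ultimately show False
    using same_class_as_right[of "l a'" "m a" "m a'"] mid_leaf[of a'] E_sym[of "m a'" "l a'"]
      not_leaf_mid[of a' a] assms
    by auto
qed

lemma no_two_mids_left_three_right:
  assumes "a < 5" "b < 5" "d < 5" "e < 5" "f < 5"
    and "pos (m e) < pos (m f)" "pos (m f) < pos c"
    and "pos c < pos (m a)" "pos (m a) < pos (m b)" "pos (m b) < pos (m d)"
  shows False
proof -
  have "a \<noteq> f" using assms by auto
  have "pos (l a) < pos c"
    using leaf_left_of_center[of a b d] assms by simp
  have "cls (m f) \<noteq> cls c"
    using mid_class_ne_center_left[of f e] assms by simp
  moreover have "cls (m a) \<noteq> cls c"
    using mid_class_ne_center_right[of a d] assms by simp
  ultimately have "cls (m f) = cls (m a)"
    using class_of_third[of "m f" c "m a"] assms by auto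
  have "pos (l a) \<noteq> pos (m f)"
    using leaf_ne_mid[OF _ _ \<open>a \<noteq> f\<close>] assms by (simp add: pos_eq_iff)
  then consider "pos (l a) < pos (m f)" | "pos (m f) < pos (l a)"
    by linarith
  then show False
  proof cases
    case 1
    then have "pos (m f) < pos (m a)" using assms by simp
    then show False
      using 1 same_class_as_right[of "l a" "m f" "m a"] \<open>cls (m f) = cls (m a)\<close>
        mid_leaf[of a] E_sym[of "m a" "l a"] not_leaf_mid[of a f] \<open>a \<noteq> f\<close> assms
      by auto
  next
    case 2
    then show False
      using same_class_as_left[of "m f" "l a" c] same_class_as_right[of "m f" "l a" c]
        class_of_third[of "m f" c "l a"] \<open>cls (m f) \<noteq> cls c\<close> \<open>pos (l a) < pos c\<close>
        center_mid[of f] E_sym[of c "m f"] not_center_leaf[of a] E_sym[of c "l a"]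
        not_leaf_mid[of a f] E_sym[of "m f" "l a"] \<open>a \<noteq> f\<close> assms
      by auto
  qed
qed

lemma inj_on_pos_mid: "inj_on (\<lambda>i. pos (m i)) {..<5}"
proof -
  have "inj_on pos (m ` {..<5})"
    using inj_pos by (rule inj_on_subset) auto
  with inj_on_mid show ?thesis
    using comp_inj_on by (auto simp: comp_def)
qed

lemma increasing_mids:
  assumes "k \<le> card {i. i < 5 \<and> P i}"
  obtains xs where "length xs = k" "set xs \<subseteq> {i. i < 5 \<and> P i}"
    "sorted_wrt (\<lambda>i j. pos (m i) < pos (m j)) xs"
proof (rule obtain_increasing_list[OF _ _ assms])
  show "inj_on (\<lambda>i. pos (m i)) {i. i < 5 \<and> P i}"
    using inj_on_pos_mid by (rule inj_on_subset) auto
qed (use that in auto)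

lemma card_mids_right_less_4: "card {i. i < 5 \<and> pos c < pos (m i)} < 4"
proof (rule ccontr)
  assume "\<not> ?thesis"
  then have "4 \<le> card {i. i < 5 \<and> pos c < pos (m i)}" by simp
  then obtain xs where xs: "length xs = 4" "set xs \<subseteq> {i. i < 5 \<and> pos c < pos (m i)}"
    "sorted_wrt (\<lambda>i j. pos (m i) < pos (m j)) xs"
    by (rule increasing_mids)
  then obtain a a' b d where "xs = [a, a', b, d]"
    by (auto simp: numeral_eq_Suc length_Suc_conv)
  then show False
    using xs no_four_mids_right[of a a' b d] by auto
qed

lemma card_mids_left_less_2_or_right_less_3:
  "card {i. i < 5 \<and> pos (m i) < pos c} < 2 \<or> card {i. i < 5 \<and> pos c < pos (m i)} < 3"
proof (rule ccontr)
  assume "\<not> ?thesis"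
  then have right: "3 \<le> card {i. i < 5 \<and> pos c < pos (m i)}"
    and left: "2 \<le> card {i. i < 5 \<and> pos (m i) < pos c}" by simp_all
  obtain xs where
    xs: "length xs = 3" "set xs \<subseteq> {i. i < 5 \<and> pos c < pos (m i)}"
      "sorted_wrt (\<lambda>i j. pos (m i) < pos (m j)) xs"
    using right by (rule increasing_mids)
  obtain ys where
    ys: "length ys = 2" "set ys \<subseteq> {i. i < 5 \<and> pos (m i) < pos c}"
      "sorted_wrt (\<lambda>i j. pos (m i) < pos (m j)) ys"
    using left by (rule increasing_mids)
  obtain a b d where "xs = [a, b, d]"
    using xs(1) by (auto simp: numeral_eq_Suc length_Suc_conv)
  moreover obtain e f where "ys = [e, f]"
    using ys(1) by (auto simp: numeral_eq_Suc length_Suc_conv)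
  ultimately show False
    using xs ys no_two_mids_left_three_right[of a b d e f] by auto
qed

lemma card_mids_left_plus_right:
  "card {i. i < 5 \<and> pos (m i) < pos c} + card {i. i < 5 \<and> pos c < pos (m i)} = 5"
proof -
  have "pos (m i) \<noteq> pos c" if "i < 5" for i
    using mid_ne_center[OF that] that by (simp add: pos_eq_iff)
  then have "{i. i < 5 \<and> pos (m i) < pos c} \<union> {i. i < 5 \<and> pos c < pos (m i)} = {..<5}"
    by (auto simp: neq_iff)
  moreover have "card ({i. i < 5 \<and> pos (m i) < pos c} \<union> {i. i < 5 \<and> pos c < pos (m i)}) =
      card {i. i < 5 \<and> pos (m i) < pos c} + card {i. i < 5 \<and> pos c < pos (m i)}"
    by (rule card_Un_disjoint) auto
  ultimately show ?thesis by simp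
qed

end

lemma star_layout_reverse:
  assumes "star_layout E c m l pos cls"
  shows "star_layout E c m l (\<lambda>v. - pos v) cls"
proof -
  interpret star_layout E c m l pos cls by fact
  show ?thesis
    using strongly_consistent_on_reverse[OF E_sym consistent] inj_pos two_classes
    by unfold_locales (auto simp: inj_on_def)
qed

context subdivided_star
begin

lemma no_star_layout: "\<not> star_layout E c m l pos cls"
proof
  assume layout: "star_layout E c m l pos cls"
  interpret star_layout E c m l pos cls by (fact layout)
  interpret reversed: star_layout E c m l "\<lambda>v. - pos v" cls
    by (rule star_layout_reverse[OF layout])
  show False
    using card_mids_right_less_4 reversed.card_mids_right_less_4
      card_mids_left_less_2_or_right_less_3 reversed.card_mids_left_less_2_or_right_less_3
      card_mids_left_plus_right
    by simp
qed

lemma not_pthin_with_2: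
  assumes "star_vertices \<subseteq> V"
  shows "\<not> pthin_with V E 2"
proof
  assume "pthin_with V E 2"
  then obtain ord cls where ord: "distinct ord" "set ord = V"
    and classes: "cls ` V \<subseteq> {..<2}" and consistent: "strongly_consistent V E ord cls"
    unfolding pthin_with_def by blast
  have "star_vertices \<subseteq> set ord" using ord assms by simp
  then obtain pos where "strongly_consistent_on star_vertices E pos cls"
    and "inj_on pos star_vertices"
    using strongly_consistent_on_positions[OF ord(1) _ consistent] by blast
  with classes assms have "star_layout E c m l pos cls"
    by unfold_locales auto
  then show False using no_star_layout by blast
qed

end

definition TA_edges :: "(nat \<times> nat) list" where
  "TA_edges =
    [(0,1),(1,6),(0,2),(2,7),(0,3),(3,8),(0,4),(4,9),(0,5),(5,10),
     (11,12),(12,17),(11,13),(13,18),(11,14),(14,19),(11,15),(15,20),(11,16),(16,21),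
     (22,23),(23,28),(22,24),(24,29),(22,25),(25,30),(22,26),(26,31),(22,27),(27,32),
     (33,6),(33,17),(33,28)]"

lemma TA_arc_iff: "TA_arc u v \<longleftrightarrow> (u, v) \<in> set TA_edges"
proof -
  have ex3: "(\<exists>c<3. P c) \<longleftrightarrow> P 0 \<or> P 1 \<or> P 2" for P :: "nat \<Rightarrow> bool"
    by (auto simp: eval_nat_numeral less_Suc_eq)
  have ex5: "(\<exists>i\<in>{1..5}. Q i) \<longleftrightarrow> Q 1 \<or> Q 2 \<or> Q 3 \<or> Q 4 \<or> Q 5" for Q :: "nat \<Rightarrow> bool"
    by (auto simp: atLeastAtMost_iff eval_nat_numeral le_Suc_eq)
  show ?thesis
    unfolding TA_arc_def TA_edges_def ex3 ex5 by (simp add: disj_assoc flip: One_nat_def)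
qed

lemma TA_E_iff: "TA_E u v \<longleftrightarrow> (u, v) \<in> set TA_edges \<or> (v, u) \<in> set TA_edges"
  unfolding TA_E_def TA_arc_iff ..

definition TA_order :: "nat list" where
  "TA_order = [31, 26, 32, 27, 25, 29, 22, 24, 23, 30, 28, 5, 10, 7, 2, 1, 33,
               0, 6, 17, 4, 9, 8, 3, 12, 14, 19, 11, 21, 16, 15, 20, 13, 18]"

definition TA_class :: "nat \<Rightarrow> nat" where
  "TA_class v = [0, 2, 2, 0, 1, 0, 2, 2, 1, 1, 2, 1, 2, 2, 2, 2, 2,
                 2, 1, 0, 0, 0, 2, 0, 0, 1, 2, 1, 1, 0, 2, 2, 0, 1] ! v"

lemma sort_TA_order: "sort TA_order = [0..<34]"
  by (simp add: TA_order_def upt_rec)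

lemma set_TA_order: "set TA_order = TA_V"
  by (metis sort_TA_order set_sort set_upt atLeast0LessThan TA_V_def)

lemma TA_class_less_3: "TA_class ` TA_V \<subseteq> {..<3}"
  by (auto simp: TA_class_def TA_V_def lessThan_nat_numeral)

lemma strongly_consistent_TA: "strongly_consistent TA_V TA_E TA_order TA_class"
  unfolding strongly_consistent_iff_triples_wrt TA_E_iff
  by (simp add: TA_order_def TA_class_def TA_edges_def)

lemma distinct_TA_order: "distinct TA_order"
  by (metis distinct_sort distinct_upt sort_TA_order)

lemma pthin_with_TA_3: "pthin_with TA_V TA_E 3"
  unfolding pthin_with_def
  using distinct_TA_order set_TA_order TA_class_less_3 strongly_consistent_TA by blast

lemma TA_subdivided_star: "subdivided_star TA_E 0 Suc (\<lambda>i. i + 6)"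
proof
  show "TA_E u v \<longleftrightarrow> TA_E v u" for u v
    unfolding TA_E_def by blast
  have less_5: "i < 5 \<longleftrightarrow> i \<in> {0, 1, 2, 3, 4}" for i :: nat by auto
  show "TA_E 0 (Suc i)" "TA_E (Suc i) (i + 6)" "\<not> TA_E 0 (i + 6)" if "i < 5" for i
    using that unfolding less_5 by (elim insertE emptyE; simp add: TA_E_iff TA_edges_def)+
  show "\<not> TA_E (Suc i) (Suc j)" if "i < 5" "j < 5" for i j
    using that unfolding less_5 by (elim insertE emptyE; simp add: TA_E_iff TA_edges_def)
  show "\<not> TA_E (i + 6) (Suc j)" if "i < 5" "j < 5" "i \<noteq> j" for i j
    using that unfolding less_5 by (elim insertE emptyE; simp add: TA_E_iff TA_edges_def)
qed

theorem proposition6: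
  shows "pthin TA_V TA_E = 3"
proof -
  interpret subdivided_star TA_E 0 Suc "\<lambda>i. i + 6"
    by (rule TA_subdivided_star)
  have "star_vertices \<subseteq> TA_V"
    by (auto simp: star_vertices_def TA_V_def)
  then have "\<not> pthin_with TA_V TA_E 2"
    by (rule not_pthin_with_2)
  with pthin_with_TA_3 show ?thesis
    using pthin_eqI[of TA_V TA_E 2] by simp
qed

end
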